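(* Let $G$ be a finite simple graph, and suppose $w_1(u)=c$ for all $u\in V(G)$, where $c$ is a fixed real number. Then for any edge weight function $w$, the multiplicity of $c$ as a root of $\eta_{(w,w_1)}(G,x)$ equals $\mathrm{def}(G)$, the number of vertices left uncovered by a maximum matching of $G$.
   Context: An edge weight function $w$ assigns a nonzero complex number to each edge; induced subgraphs carry restricted weights. For $A\subseteq E(G)$, $w(A)=\prod_{e\in A}w(e)$. $\mu_w(G,x)=\sum_{M}(-1)^{|M|}|w(M)|^2x^{n-2|M|}$ over all matchings $M$ of $G$ (including empty), $n=|V(G)|$. $\eta_{(w,w_1)}(G,x)=\sum_{S\subseteq V(G)}(-1)^{|V(G)\setminus S|}\big(\prod_{y\in V(G)\setminus S}w_1(y)\big)\mu_w(G[S],x)$ with $G[S]$ the induced subgraph and $\mu_w$ of the empty graph equal to $1$. *)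

theory Defs
  imports Complex_Main "HOL-Computational_Algebra.Polynomial"
begin

definition simple_graph :: "'a set \<Rightarrow> 'a set set \<Rightarrow> bool" where
  "simple_graph V E \<longleftrightarrow> finite V \<and>
     (\<forall>e\<in>E. \<exists>u v. e = {u, v} \<and> u \<noteq> v \<and> u \<in> V \<and> v \<in> V)"

definition matchings :: "'a set set \<Rightarrow> 'a set set set" where
  "matchings E = {M. M \<subseteq> E \<and> (\<forall>e1\<in>M. \<forall>e2\<in>M. e1 \<noteq> e2 \<longrightarrow> e1 \<inter> e2 = {})}"

definition induced_edges :: "'a set set \<Rightarrow> 'a set \<Rightarrow> 'a set set" where
  "induced_edges E S = {e \<in> E. e \<subseteq> S}"

definition mu_w :: "'a set \<Rightarrow> 'a set set \<Rightarrow> ('a set \<Rightarrow> complex) \<Rightarrow> complex poly" where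
  "mu_w V E w = (\<Sum>M\<in>matchings E.
      monom ((-1) ^ card M * complex_of_real ((cmod (\<Prod>e\<in>M. w e))\<^sup>2)) (card V - 2 * card M))"

definition eta :: "'a set \<Rightarrow> 'a set set \<Rightarrow> ('a set \<Rightarrow> complex) \<Rightarrow> ('a \<Rightarrow> complex) \<Rightarrow> complex poly" where
  "eta V E w w1 = (\<Sum>S\<in>Pow V.
      [: (-1) ^ card (V - S) * (\<Prod>y\<in>V - S. w1 y) :] * mu_w S (induced_edges E S) w)"

definition matching_number :: "'a set set \<Rightarrow> nat" where
  "matching_number E = Max (card ` matchings E)"

definition deficiency :: "'a set \<Rightarrow> 'a set set \<Rightarrow> nat" where
  "deficiency V E = card V - 2 * matching_number E"

end

theory Submission
  imports Defs
begin

text \<open>With a constant vertex weight \<open>c\<close>, the subsets \<open>S\<close> containing the vertices covered by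
  a matching \<open>M\<close> contribute, by the binomial theorem, exactly
  \<open>(-1)^|M| |w(M)|^2 (x - c)^(n - 2|M|)\<close>. Hence \<open>(x - c)^def(G)\<close> divides \<open>\<eta>\<close>, and the
  cofactor evaluated at \<open>c\<close> is \<open>(-1)^\<nu>\<close> times the sum of \<open>|w(M)|^2 > 0\<close> over the
  maximum matchings \<open>M\<close>, which does not vanish.\<close>

definition matching_weight :: "('a set \<Rightarrow> complex) \<Rightarrow> 'a set set \<Rightarrow> complex" where
  "matching_weight w M = (-1) ^ card M * complex_of_real ((cmod (\<Prod>e\<in>M. w e))\<^sup>2)"

lemma mu_w_eq:
  "mu_w V E w = (\<Sum>M\<in>matchings E. monom (matching_weight w M) (card V - 2 * card M))"
  unfolding mu_w_def matching_weight_def ..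

lemma sum_Pow_power_card:
  fixes x y :: "'b::comm_semiring_1"
  assumes "finite U"
  shows "(\<Sum>T\<in>Pow U. x ^ card T * y ^ card (U - T)) = (x + y) ^ card U"
proof -
  have "(x + y) ^ card U = (\<Prod>_\<in>U. x + y)" by simp
  also have "\<dots> = (\<Sum>T\<in>Pow U. (\<Prod>_\<in>T. x) * (\<Prod>_\<in>U - T. y))"
    by (rule prod_add[OF assms])
  finally show ?thesis by simp
qed

lemma sum_supersets_monom:
  fixes K a :: "'b::comm_ring_1"
  assumes "finite V" "W \<subseteq> V"
  shows "(\<Sum>S\<in>{S \<in> Pow V. W \<subseteq> S}. [:(-K) ^ card (V - S):] * monom a (card S - card W))
       = smult a ([:-K, 1:] ^ card (V - W))"
proof -
  define U where "U = V - W"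
  have fin: "finite U" "finite W" using assms finite_subset unfolding U_def by blast+
  have image: "(\<lambda>T. W \<union> T) ` Pow U = {S \<in> Pow V. W \<subseteq> S}"
    unfolding U_def using assms(2) by (auto intro!: image_eqI[of _ _ "_ - W"])
  have inj: "inj_on (\<lambda>T. W \<union> T) (Pow U)"
    unfolding U_def by (auto simp: inj_on_def)
  have summand: "[:(-K) ^ card (V - (W \<union> T)):] * monom a (card (W \<union> T) - card W)
      = smult a ([:0, 1:] ^ card T * [:-K:] ^ card (U - T))" if "T \<in> Pow U" for T
  proof -
    have "V - (W \<union> T) = U - T" unfolding U_def by blast
    moreover have "card (W \<union> T) = card W + card T"
      using that fin by (intro card_Un_disjoint) (auto simp: U_def finite_subset)
    ultimately show ?thesis by (simp add: monom_altdef poly_const_pow mult_ac)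
  qed
  have "(\<Sum>S\<in>{S \<in> Pow V. W \<subseteq> S}. [:(-K) ^ card (V - S):] * monom a (card S - card W))
      = (\<Sum>T\<in>Pow U. smult a ([:0, 1:] ^ card T * [:-K:] ^ card (U - T)))"
    unfolding image[symmetric] sum.reindex[OF inj] o_def using summand by (rule sum.cong[OF refl])
  also have "\<dots> = smult a ([:-K, 1:] ^ card U)"
    using sum_Pow_power_card[OF fin(1), of "[:0, 1:]" "[:-K:]"]
      sum_distrib_left[of "[:a:]" "\<lambda>T. [:0, 1:] ^ card T * [:-K:] ^ card (U - T)" "Pow U"]
    by simp
  finally show ?thesis unfolding U_def .
qed

lemma order_sum_smult_linear_power:
  fixes b :: "'i \<Rightarrow> 'b::idom"
  assumes "finite A" "A \<noteq> {}"
    and "(\<Sum>i\<in>{i \<in> A. f i = Min (f ` A)}. b i) \<noteq> 0"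
  shows "order a (\<Sum>i\<in>A. smult (b i) ([:-a, 1:] ^ f i)) = Min (f ` A)"
proof -
  define m where "m = Min (f ` A)"
  define q where "q = (\<Sum>i\<in>A. smult (b i) ([:-a, 1:] ^ (f i - m)))"
  have m_le: "m \<le> f i" if "i \<in> A" for i
    unfolding m_def using assms(1) that by simp
  have factor: "(\<Sum>i\<in>A. smult (b i) ([:-a, 1:] ^ f i)) = [:-a, 1:] ^ m * q"
    unfolding q_def sum_distrib_left
    by (intro sum.cong refl) (simp add: m_le power_add[symmetric])
  have "poly q a = (\<Sum>i\<in>A. if f i = m then b i else 0)"
    unfolding q_def poly_sum using m_le by (intro sum.cong) (auto simp: le_less)
  also have "\<dots> = (\<Sum>i\<in>{i \<in> A. f i = m}. b i)"
    using assms(1) by (simp add: sum.inter_filter)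
  finally have "poly q a \<noteq> 0" using assms(3) unfolding m_def by simp
  then have "order a ([:-a, 1:] ^ m * q) = m"
    by (subst order_mult) (auto simp: order_power_n_n order_0I)
  then show ?thesis unfolding factor m_def .
qed

lemma matchings_induced_edges:
  "matchings (induced_edges E S) = {M \<in> matchings E. \<Union>M \<subseteq> S}"
  unfolding matchings_def induced_edges_def by blast

lemma finite_matchings: "finite E \<Longrightarrow> finite (matchings E)"
  unfolding matchings_def by auto

lemma matching_number_ge: "finite E \<Longrightarrow> M \<in> matchings E \<Longrightarrow> card M \<le> matching_number E"
  unfolding matching_number_def by (simp add: finite_matchings)

lemma matching_number_attained:
  assumes "finite E"
  obtains M where "M \<in> matchings E" "card M = matching_number E"
proof -
  have "{} \<in> matchings E" unfolding matchings_def by auto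
  then have "matching_number E \<in> card ` matchings E"
    unfolding matching_number_def using assms by (intro Max_in) (auto simp: finite_matchings)
  then show ?thesis using that by (metis imageE)
qed

lemma simple_graph_finite_edges:
  assumes "simple_graph V E" shows "finite E"
proof -
  have "E \<subseteq> Pow V" using assms unfolding simple_graph_def by auto
  then show ?thesis using assms unfolding simple_graph_def by (meson finite_Pow_iff finite_subset)
qed

lemma
  assumes "simple_graph V E" "M \<in> matchings E"
  shows matching_Union_subset: "\<Union>M \<subseteq> V"
    and card_Union_matching: "card (\<Union>M) = 2 * card M"
proof -
  have edge: "e \<subseteq> V \<and> card e = 2" if "e \<in> M" for e
    using assms that unfolding simple_graph_def matchings_def by fastforce
  then show "\<Union>M \<subseteq> V" by blast
  have "finite V" using assms(1) unfolding simple_graph_def by simp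
  have "card (\<Union>M) = sum card M"
  proof (rule card_Union_disjoint)
    show "pairwise disjnt M"
      using assms(2) unfolding matchings_def pairwise_def disjnt_def by blast
    show "finite e" if "e \<in> M" for e
      using edge[OF that] \<open>finite V\<close> finite_subset by blast
  qed
  also have "\<dots> = (\<Sum>_\<in>M. 2)" using edge by (intro sum.cong) auto
  finally show "card (\<Union>M) = 2 * card M" by simp
qed

lemma two_card_matching_le:
  assumes "simple_graph V E" "M \<in> matchings E"
  shows "2 * card M \<le> card V"
  using assms card_mono matching_Union_subset card_Union_matching
  unfolding simple_graph_def by metis

lemma eta_const_vertex_weight:
  assumes "simple_graph V E" "\<forall>u\<in>V. w1 u = K"
  shows "eta V E w w1
       = (\<Sum>M\<in>matchings E. smult (matching_weight w M) ([:-K, 1:] ^ (card V - 2 * card M)))"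
proof -
  let ?t = "\<lambda>M S. [:(-K) ^ card (V - S):] * monom (matching_weight w M) (card S - 2 * card M)"
  have finV: "finite V" using assms(1) unfolding simple_graph_def by simp
  have coeff: "(-1) ^ card (V - S) * (\<Prod>y\<in>V - S. w1 y) = (-K) ^ card (V - S)" for S
  proof -
    have "(\<Prod>y\<in>V - S. w1 y) = K ^ card (V - S)"
      using assms(2) by (simp add: prod_constant[symmetric] del: prod_constant)
    then show ?thesis by (simp add: power_minus[of K])
  qed
  have "eta V E w w1 = (\<Sum>S\<in>Pow V. \<Sum>M\<in>{M \<in> matchings E. \<Union>M \<subseteq> S}. ?t M S)"
    unfolding eta_def mu_w_eq matchings_induced_edges coeff by (simp add: sum_distrib_left)
  also have "\<dots> = (\<Sum>M\<in>matchings E. \<Sum>S\<in>{S \<in> Pow V. \<Union>M \<subseteq> S}. ?t M S)"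
    using finV simple_graph_finite_edges[OF assms(1)]
    by (intro sum.swap_restrict) (auto simp: finite_matchings)
  also have "\<dots> = (\<Sum>M\<in>matchings E.
      smult (matching_weight w M) ([:-K, 1:] ^ (card V - 2 * card M)))"
  proof (intro sum.cong refl)
    fix M assume M: "M \<in> matchings E"
    note sub = matching_Union_subset[OF assms(1) M] and card = card_Union_matching[OF assms(1) M]
    have "card (V - \<Union>M) = card V - 2 * card M"
      using finV sub card by (simp add: card_Diff_subset finite_subset)
    then show "(\<Sum>S\<in>{S \<in> Pow V. \<Union>M \<subseteq> S}. ?t M S)
        = smult (matching_weight w M) ([:-K, 1:] ^ (card V - 2 * card M))"
      using sum_supersets_monom[OF finV sub, of K] card by simp
  qed
  finally show ?thesis .
qed

lemma sum_matching_weight_card_eq_nonzero: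
  assumes "finite E" "\<forall>e\<in>E. w e \<noteq> 0" "M0 \<in> matchings E"
  shows "(\<Sum>M\<in>{M \<in> matchings E. card M = card M0}. matching_weight w M) \<noteq> 0"
proof -
  let ?A = "{M \<in> matchings E. card M = card M0}"
  have "M0 \<subseteq> E" using assms(3) unfolding matchings_def by simp
  moreover from this have "finite M0" using assms(1) by (rule finite_subset)
  ultimately have "(\<Prod>e\<in>M0. w e) \<noteq> 0"
    using assms(2) by auto
  then have pos: "(\<Sum>M\<in>?A. (cmod (\<Prod>e\<in>M. w e))\<^sup>2) > 0"
    using assms(1,3) by (intro sum_pos2[of _ M0]) (auto simp: finite_matchings)
  have "(\<Sum>M\<in>?A. matching_weight w M)
      = (-1) ^ card M0 * complex_of_real (\<Sum>M\<in>?A. (cmod (\<Prod>e\<in>M. w e))\<^sup>2)"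
    unfolding matching_weight_def by (simp add: sum_distrib_left)
  moreover have "complex_of_real (\<Sum>M\<in>?A. (cmod (\<Prod>e\<in>M. w e))\<^sup>2) \<noteq> 0"
    using pos by (simp del: of_real_sum)
  ultimately show ?thesis by (simp del: of_real_sum)
qed

theorem lemma6p6:
  fixes V :: "'a set" and E :: "'a set set"
    and w :: "'a set \<Rightarrow> complex" and w1 :: "'a \<Rightarrow> complex" and c :: real
  assumes "simple_graph V E"
    and "\<forall>e\<in>E. w e \<noteq> 0"
    and "\<forall>u\<in>V. w1 u = complex_of_real c"
  shows "order (complex_of_real c) (eta V E w w1) = deficiency V E"
proof -
  define f where "f M = card V - 2 * card M" for M :: "'a set set"
  have finE: "finite E" using simple_graph_finite_edges[OF assms(1)] .
  obtain M0 where M0: "M0 \<in> matchings E" "card M0 = matching_number E"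
    using matching_number_attained[OF finE] .
  have "f M0 \<le> f M" if "M \<in> matchings E" for M
    using matching_number_ge[OF finE that] M0(2) unfolding f_def by simp
  then have min_f: "Min (f ` matchings E) = f M0"
    using M0(1) by (intro Min_eqI) (auto simp: finite_matchings[OF finE])
  then have min: "Min (f ` matchings E) = deficiency V E"
    unfolding f_def deficiency_def M0(2) .
  have "f M = f M0 \<longleftrightarrow> card M = card M0" if "M \<in> matchings E" for M
    using two_card_matching_le[OF assms(1) that] two_card_matching_le[OF assms(1) M0(1)]
    unfolding f_def by arith
  then have "{M \<in> matchings E. f M = Min (f ` matchings E)} = {M \<in> matchings E. card M = card M0}"
    using min_f by auto
  then have "order (complex_of_real c)
      (\<Sum>M\<in>matchings E. smult (matching_weight w M) ([:-complex_of_real c, 1:] ^ f M))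
      = Min (f ` matchings E)"
    using M0(1) finite_matchings[OF finE] sum_matching_weight_card_eq_nonzero[OF finE assms(2) M0(1)]
    by (intro order_sum_smult_linear_power) auto
  then show ?thesis
    unfolding eta_const_vertex_weight[OF assms(1,3)] min f_def .
qed

end
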